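(* Fix any vector of nodal storage capacities $Q^{\rm s}=(Q^{\rm s}_1,\dots,Q^{\rm s}_I)\ge 0$ and consider the lower-level stochastic Cournot game described in the context. At any Nash equilibrium of this game, for every node $i$, every time $t\in\{1,\dots,N_{\rm T}\}$ and every scenario $w\in\{1,\dots,N_{\rm w}\}$, the charge level $q^{\rm ch}_{itw}$ and discharge level $q^{\rm dis}_{itw}$ of the storage firm at node $i$ are not simultaneously positive; i.e. each storage firm is either in charge mode or in discharge mode (or idle).
   Context: Market model. There are $I$ nodes, time periods $t\in\{1,\dots,N_{\rm T}\}$ of length $\Delta>0$, and wind scenarios $w\in\{1,\dots,N_{\rm w}\}$ with probabilities $\Psi_w>0$. Node $i$ hosts a set $\mathcal N^{\rm cg}_i$ of classical generators, a set $\mathcal N^{\rm wg}_i$ of wind generators and one storage firm; $\mathcal N_i$ is the set of neighbouring nodes of $i$, and each pair of neighbouring nodes $i,j$ is linked by a transmission firm. The price at node $i$, time $t$, scenario $w$ is $P_{itw}=\alpha_{it}\exp\!\big(-\beta_{it}\big(q^{\rm s}_{itw}+\sum_{m\in\mathcal N^{\rm wg}_i}q^{\rm wg}_{mitw}+\sum_{n\in\mathcal N^{\rm cg}_i}q^{\rm cg}_{nitw}+\sum_{j\in\mathcal N_i}q^{\rm tr}_{ijtw}\big)\big)$ with $\alpha_{it},\beta_{it}>0$. Firms (each chooses its variables for all $t,w$ simultaneously): (1) Wind generator $m$ at node $i$: maximizes $\sum_w\Psi_w\sum_t P_{itw}q^{\rm wg}_{mitw}$ subject to $0\le q^{\rm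 wg}_{mitw}\le Q^{\rm wg}_{mitw}$ (given available wind capacities). (2) Storage firm at node $i$: chooses $q^{\rm dis}_{itw},q^{\rm ch}_{itw}\ge0$ and $q^{\rm s}_{itw}$ to maximize $\sum_w\Psi_w\sum_t\big[P_{itw}q^{\rm s}_{itw}-c^{\rm s}_i(q^{\rm dis}_{itw}+q^{\rm ch}_{itw})-\gamma^{\rm s}_i\big(P_{itw}q^{\rm s}_{itw}+P_{itw}/\beta_{it}\big)\big]$ subject to, for all $t,w$: $q^{\rm s}_{itw}=\eta^{\rm dis}_i q^{\rm dis}_{itw}-q^{\rm ch}_{itw}/\eta^{\rm ch}_i$; $q^{\rm dis}_{itw}\le\zeta^{\rm dis}_iQ^{\rm s}_i$; $q^{\rm ch}_{itw}\le\zeta^{\rm ch}_iQ^{\rm s}_i$; $0\le\sum_{k=1}^t(q^{\rm ch}_{ikw}-q^{\rm dis}_{ikw})\Delta\le Q^{\rm s}_i$. Here $c^{\rm s}_i>0$ is the unit operation cost, $\eta^{\rm ch}_i,\eta^{\rm dis}_i\in(0,1]$ are charging/discharging efficiencies, $\zeta^{\rm ch}_i,\zeta^{\rm dis}_i>0$, and $\gamma^{\rm s}_i\in\{0,1\}$ ($0$: strategic, $1$: regulated). (3) Classical generator $n$ at node $i$: maximizes $\sum_w\Psi_w\sum_t(P_{itw}-c^{\rm cg}_{ni})q^{\rm cg}_{nitw}$ subject to $0\le q^{\rm cg}_{nitw}\le Q^{\rm cg}_{ni}$, $q^{\rm cg}_{nitw}-q^{\rm cg}_{ni(t-1)w}\le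 R^{\rm up}_{ni}$, $q^{\rm cg}_{ni(t-1)w}-q^{\rm cg}_{nitw}\le R^{\rm dn}_{ni}$. (4) Transmission firm between neighbouring nodes $i,j$: chooses $q^{\rm tr}_{ijtw},q^{\rm tr}_{jitw}$ to maximize $\sum_w\Psi_w\sum_t\big[(1-\gamma^{\rm tr}_{ij})(P_{jtw}q^{\rm tr}_{jitw}+P_{itw}q^{\rm tr}_{ijtw})+\gamma^{\rm tr}_{ij}(-P_{jtw}/\beta_{jt}-P_{itw}/\beta_{it})\big]$ subject to $q^{\rm tr}_{ijtw}=-q^{\rm tr}_{jitw}$ and $-Q^{\rm tr}_{ij}\le q^{\rm tr}_{ijtw}\le Q^{\rm tr}_{ij}$, with $\gamma^{\rm tr}_{ij}\in\{0,1\}$. A Nash equilibrium is a profile of all firms' strategies in which each firm's strategy is optimal for its problem given the other firms' strategies. *)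

theory Defs
  imports Complex_Main
begin

text \<open>Times range over {1..NT}, scenarios over {1..NW}. A wind (classical) generator
  is identified by the pair (m, i) with m \<in> WG i (n \<in> CG i).\<close>

record market =
  Nodes :: "nat set"
  NT :: nat
  NW :: nat
  Delta :: real
  Psi :: "nat \<Rightarrow> real"
  alpha :: "nat \<Rightarrow> nat \<Rightarrow> real"
  beta :: "nat \<Rightarrow> nat \<Rightarrow> real"
  CG :: "nat \<Rightarrow> nat set"
  WG :: "nat \<Rightarrow> nat set"
  Nb :: "nat \<Rightarrow> nat set"
  Qwg :: "nat \<Rightarrow> nat \<Rightarrow> nat \<Rightarrow> nat \<Rightarrow> real"
  Qs :: "nat \<Rightarrow> real"
  cs :: "nat \<Rightarrow> real"
  eta_ch :: "nat \<Rightarrow> real"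
  eta_dis :: "nat \<Rightarrow> real"
  zeta_ch :: "nat \<Rightarrow> real"
  zeta_dis :: "nat \<Rightarrow> real"
  gamma_s :: "nat \<Rightarrow> real"
  ccg :: "nat \<Rightarrow> nat \<Rightarrow> real"
  Qcg :: "nat \<Rightarrow> nat \<Rightarrow> real"
  Rup :: "nat \<Rightarrow> nat \<Rightarrow> real"
  Rdn :: "nat \<Rightarrow> nat \<Rightarrow> real"
  gamma_tr :: "nat \<Rightarrow> nat \<Rightarrow> real"
  Qtr :: "nat \<Rightarrow> nat \<Rightarrow> real"

definition valid_market :: "market \<Rightarrow> bool" where
  "valid_market M \<longleftrightarrow>
     finite (Nodes M) \<and>
     (\<forall>i\<in>Nodes M. finite (CG M i) \<and> finite (WG M i) \<and> Nb M i \<subseteq> Nodes M \<and> i \<notin> Nb M i) \<and>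
     (\<forall>i\<in>Nodes M. \<forall>j\<in>Nb M i. i \<in> Nb M j \<and>
         gamma_tr M i j = gamma_tr M j i \<and> Qtr M i j = Qtr M j i \<and>
         (gamma_tr M i j = 0 \<or> gamma_tr M i j = 1)) \<and>
     Delta M > 0 \<and>
     (\<forall>w\<in>{1..NW M}. Psi M w > 0) \<and>
     (\<forall>i\<in>Nodes M. \<forall>t\<in>{1..NT M}. alpha M i t > 0 \<and> beta M i t > 0) \<and>
     (\<forall>i\<in>Nodes M. Qs M i \<ge> 0 \<and> cs M i > 0 \<and>
         0 < eta_ch M i \<and> eta_ch M i \<le> 1 \<and> 0 < eta_dis M i \<and> eta_dis M i \<le> 1 \<and>
         zeta_ch M i > 0 \<and> zeta_dis M i > 0 \<and>
         (gamma_s M i = 0 \<or> gamma_s M i = 1))"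

record profile =
  qwg :: "nat \<Rightarrow> nat \<Rightarrow> nat \<Rightarrow> nat \<Rightarrow> real"  \<comment> \<open>m i t w\<close>
  qcg :: "nat \<Rightarrow> nat \<Rightarrow> nat \<Rightarrow> nat \<Rightarrow> real"  \<comment> \<open>n i t w\<close>
  qs :: "nat \<Rightarrow> nat \<Rightarrow> nat \<Rightarrow> real"           \<comment> \<open>i t w\<close>
  qdis :: "nat \<Rightarrow> nat \<Rightarrow> nat \<Rightarrow> real"
  qch :: "nat \<Rightarrow> nat \<Rightarrow> nat \<Rightarrow> real"
  qtr :: "nat \<Rightarrow> nat \<Rightarrow> nat \<Rightarrow> nat \<Rightarrow> real"  \<comment> \<open>i j t w\<close>

definition price :: "market \<Rightarrow> profile \<Rightarrow> nat \<Rightarrow> nat \<Rightarrow> nat \<Rightarrow> real" where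
  "price M p i t w = alpha M i t * exp (- beta M i t *
      (qs p i t w + (\<Sum>m\<in>WG M i. qwg p m i t w) + (\<Sum>n\<in>CG M i. qcg p n i t w)
       + (\<Sum>j\<in>Nb M i. qtr p i j t w)))"

definition expect :: "market \<Rightarrow> (nat \<Rightarrow> nat \<Rightarrow> real) \<Rightarrow> real" where
  "expect M f = (\<Sum>w\<in>{1..NW M}. Psi M w * (\<Sum>t\<in>{1..NT M}. f t w))"

definition wind_profit :: "market \<Rightarrow> profile \<Rightarrow> nat \<Rightarrow> nat \<Rightarrow> real" where
  "wind_profit M p m i = expect M (\<lambda>t w. price M p i t w * qwg p m i t w)"

definition storage_profit :: "market \<Rightarrow> profile \<Rightarrow> nat \<Rightarrow> real" where
  "storage_profit M p i = expect M (\<lambda>t w.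
      price M p i t w * qs p i t w - cs M i * (qdis p i t w + qch p i t w)
      - gamma_s M i * (price M p i t w * qs p i t w + price M p i t w / beta M i t))"

definition cg_profit :: "market \<Rightarrow> profile \<Rightarrow> nat \<Rightarrow> nat \<Rightarrow> real" where
  "cg_profit M p n i = expect M (\<lambda>t w. (price M p i t w - ccg M n i) * qcg p n i t w)"

definition tr_profit :: "market \<Rightarrow> profile \<Rightarrow> nat \<Rightarrow> nat \<Rightarrow> real" where
  "tr_profit M p i j = expect M (\<lambda>t w.
      (1 - gamma_tr M i j) * (price M p j t w * qtr p j i t w + price M p i t w * qtr p i j t w)
      + gamma_tr M i j * (- price M p j t w / beta M j t - price M p i t w / beta M i t))"

definition wind_feas :: "market \<Rightarrow> nat \<Rightarrow> nat \<Rightarrow> (nat \<Rightarrow> nat \<Rightarrow> real) \<Rightarrow> bool" where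
  "wind_feas M m i f \<longleftrightarrow> (\<forall>t\<in>{1..NT M}. \<forall>w\<in>{1..NW M}. 0 \<le> f t w \<and> f t w \<le> Qwg M m i t w)"

definition storage_feas :: "market \<Rightarrow> nat \<Rightarrow> (nat \<Rightarrow> nat \<Rightarrow> real) \<Rightarrow> (nat \<Rightarrow> nat \<Rightarrow> real)
    \<Rightarrow> (nat \<Rightarrow> nat \<Rightarrow> real) \<Rightarrow> bool" where
  "storage_feas M i s dis ch \<longleftrightarrow> (\<forall>t\<in>{1..NT M}. \<forall>w\<in>{1..NW M}.
      0 \<le> dis t w \<and> 0 \<le> ch t w \<and>
      s t w = eta_dis M i * dis t w - ch t w / eta_ch M i \<and>
      dis t w \<le> zeta_dis M i * Qs M i \<and> ch t w \<le> zeta_ch M i * Qs M i \<and>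
      0 \<le> (\<Sum>k\<in>{1..t}. (ch k w - dis k w) * Delta M) \<and>
      (\<Sum>k\<in>{1..t}. (ch k w - dis k w) * Delta M) \<le> Qs M i)"

text \<open>Ramping constraints are imposed for t \<ge> 2 (no initial output is given).\<close>
definition cg_feas :: "market \<Rightarrow> nat \<Rightarrow> nat \<Rightarrow> (nat \<Rightarrow> nat \<Rightarrow> real) \<Rightarrow> bool" where
  "cg_feas M n i f \<longleftrightarrow> (\<forall>t\<in>{1..NT M}. \<forall>w\<in>{1..NW M}.
      0 \<le> f t w \<and> f t w \<le> Qcg M n i \<and>
      (2 \<le> t \<longrightarrow> f t w - f (t - 1) w \<le> Rup M n i \<and> f (t - 1) w - f t w \<le> Rdn M n i))"

definition tr_feas :: "market \<Rightarrow> nat \<Rightarrow> nat \<Rightarrow> (nat \<Rightarrow> nat \<Rightarrow> real) \<Rightarrow> (nat \<Rightarrow> nat \<Rightarrow> real) \<Rightarrow> bool" where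
  "tr_feas M i j f g \<longleftrightarrow> (\<forall>t\<in>{1..NT M}. \<forall>w\<in>{1..NW M}.
      f t w = - g t w \<and> - Qtr M i j \<le> f t w \<and> f t w \<le> Qtr M i j)"

definition upd_wind :: "profile \<Rightarrow> nat \<Rightarrow> nat \<Rightarrow> (nat \<Rightarrow> nat \<Rightarrow> real) \<Rightarrow> profile" where
  "upd_wind p m i f = p\<lparr>qwg := (\<lambda>m' i'. if m' = m \<and> i' = i then f else qwg p m' i')\<rparr>"

definition upd_cg :: "profile \<Rightarrow> nat \<Rightarrow> nat \<Rightarrow> (nat \<Rightarrow> nat \<Rightarrow> real) \<Rightarrow> profile" where
  "upd_cg p n i f = p\<lparr>qcg := (\<lambda>n' i'. if n' = n \<and> i' = i then f else qcg p n' i')\<rparr>"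

definition upd_storage :: "profile \<Rightarrow> nat \<Rightarrow> (nat \<Rightarrow> nat \<Rightarrow> real) \<Rightarrow> (nat \<Rightarrow> nat \<Rightarrow> real)
    \<Rightarrow> (nat \<Rightarrow> nat \<Rightarrow> real) \<Rightarrow> profile" where
  "upd_storage p i s dis ch = p\<lparr>qs := (qs p)(i := s), qdis := (qdis p)(i := dis), qch := (qch p)(i := ch)\<rparr>"

definition upd_tr :: "profile \<Rightarrow> nat \<Rightarrow> nat \<Rightarrow> (nat \<Rightarrow> nat \<Rightarrow> real) \<Rightarrow> (nat \<Rightarrow> nat \<Rightarrow> real) \<Rightarrow> profile" where
  "upd_tr p i j f g = p\<lparr>qtr := (\<lambda>a b. if a = i \<and> b = j then f else if a = j \<and> b = i then g else qtr p a b)\<rparr>"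

definition nash_equilibrium :: "market \<Rightarrow> profile \<Rightarrow> bool" where
  "nash_equilibrium M p \<longleftrightarrow>
    (\<forall>i\<in>Nodes M. \<forall>m\<in>WG M i. wind_feas M m i (qwg p m i) \<and>
        (\<forall>f. wind_feas M m i f \<longrightarrow> wind_profit M (upd_wind p m i f) m i \<le> wind_profit M p m i)) \<and>
    (\<forall>i\<in>Nodes M. storage_feas M i (qs p i) (qdis p i) (qch p i) \<and>
        (\<forall>s dis ch. storage_feas M i s dis ch \<longrightarrow>
            storage_profit M (upd_storage p i s dis ch) i \<le> storage_profit M p i)) \<and>
    (\<forall>i\<in>Nodes M. \<forall>n\<in>CG M i. cg_feas M n i (qcg p n i) \<and>
        (\<forall>f. cg_feas M n i f \<longrightarrow> cg_profit M (upd_cg p n i f) n i \<le> cg_profit M p n i)) \<and>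
    (\<forall>i\<in>Nodes M. \<forall>j\<in>Nb M i. tr_feas M i j (qtr p i j) (qtr p j i) \<and>
        (\<forall>f g. tr_feas M i j f g \<longrightarrow> tr_profit M (upd_tr p i j f g) i j \<le> tr_profit M p i j))"

end

theory Submission
  imports Defs
begin

text \<open>Suppose the storage firm at node i charges and discharges at the same (t0, w0). Cutting
  both flows saves operating cost, and the firm can always find such a cut with positive marginal
  profit that keeps its storage level feasible: if the marginal revenue MR of net output at t0 is
  nonnegative, cut both flows equally (the level does not move and net output rises);
  if the storage has slack from t0 on, cut them in the ratio 1 : eta_ch eta_dis (net output does
  not move, the level rises). Otherwise MR < 0 forces positive net output at t0, so the level falls
  at t0 and the first later time k at which the storage is full is a time of net charging, hence
  of negative net output and MR > 0; cutting the discharge at t0 and the charge at k is then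
  profitable and only raises the level on [t0, k), where it has slack. A positive directional
  derivative of the profit along a feasible direction contradicts equilibrium.\<close>

definition impulse :: "nat \<Rightarrow> nat \<Rightarrow> nat \<Rightarrow> nat \<Rightarrow> real" where
  "impulse t0 w0 t w = (if t = t0 \<and> w = w0 then 1 else 0)"

lemma sum_impulse_upto:
  assumes "1 \<le> s"
  shows "(\<Sum>k\<in>{1..t}. impulse s v k w) = (if w = v \<and> s \<le> t then 1 else 0)"
  using assms by (auto simp: impulse_def sum.delta')

lemma expect_add: "expect M (\<lambda>t w. f t w + g t w) = expect M f + expect M g"
  by (simp add: expect_def sum.distrib distrib_left)

lemma expect_impulse:
  assumes "t0 \<in> {1..NT M}" "w0 \<in> {1..NW M}"
  shows "expect M (\<lambda>t w. impulse t0 w0 t w * f t w) = Psi M w0 * f t0 w0"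
proof -
  have "impulse t0 w0 t w * f t w = (if t = t0 then (if w = w0 then f t0 w0 else 0) else 0)" for t w
    by (simp add: impulse_def)
  then have "(\<Sum>t\<in>{1..NT M}. impulse t0 w0 t w * f t w) = (if w = w0 then f t0 w0 else 0)" for w
    using assms(1) by (simp add: sum.delta')
  then show ?thesis
    using assms(2) by (simp add: expect_def if_distrib[of "(*) _"] sum.delta' cong: if_cong)
qed

lemma storage_net_output_le:
  fixes x y :: real
  assumes "0 < \<eta>\<^sub>c" "\<eta>\<^sub>c \<le> 1" "0 \<le> \<eta>\<^sub>d" "\<eta>\<^sub>d \<le> 1" "0 \<le> x" "0 \<le> y"
  shows "\<eta>\<^sub>d * x - y / \<eta>\<^sub>c \<le> x - y"
proof -
  have "y \<le> y / \<eta>\<^sub>c" using assms by (simp add: le_divide_eq mult_left_le)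
  moreover have "\<eta>\<^sub>d * x \<le> x" using assms by (simp add: mult_left_le_one_le)
  ultimately show ?thesis by linarith
qed

lemma storage_period_profit_deriv:
  fixes \<alpha> \<beta> X q E x y D C c g :: real
  assumes "\<beta> > 0"
  shows "((\<lambda>a. \<alpha> * exp (- \<beta> * (X - a * E)) * (q - a * E) - c * ((x - a * D) + (y - a * C))
      - g * (\<alpha> * exp (- \<beta> * (X - a * E)) * (q - a * E) + \<alpha> * exp (- \<beta> * (X - a * E)) / \<beta>))
     has_real_derivative
      (c * (D + C) - E * (\<alpha> * exp (- \<beta> * X)) * ((1 - g) * (1 - \<beta> * q) + g))) (at 0)"
  using assms by (auto intro!: derivative_eq_intros simp: algebra_simps)

lemma storage_feas_shift:
  fixes D C :: "nat \<Rightarrow> nat \<Rightarrow> real"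
  assumes feas: "storage_feas M i s dis ch"
    and "eta_ch M i \<noteq> 0" "0 \<le> a" "\<And>t w. 0 \<le> D t w" "\<And>t w. 0 \<le> C t w"
    and dis: "\<And>t w. t \<in> {1..NT M} \<Longrightarrow> w \<in> {1..NW M} \<Longrightarrow> a * D t w \<le> dis t w"
    and ch: "\<And>t w. t \<in> {1..NT M} \<Longrightarrow> w \<in> {1..NW M} \<Longrightarrow> a * C t w \<le> ch t w"
    and level: "\<And>t w. t \<in> {1..NT M} \<Longrightarrow> w \<in> {1..NW M} \<Longrightarrow>
        0 \<le> (\<Sum>k\<in>{1..t}. (ch k w - dis k w) * Delta M) + a * Delta M * (\<Sum>k\<in>{1..t}. D k w - C k w) \<and>
        (\<Sum>k\<in>{1..t}. (ch k w - dis k w) * Delta M) + a * Delta M * (\<Sum>k\<in>{1..t}. D k w - C k w) \<le> Qs M i"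
  shows "storage_feas M i (\<lambda>t w. s t w - a * (eta_dis M i * D t w - C t w / eta_ch M i))
        (\<lambda>t w. dis t w - a * D t w) (\<lambda>t w. ch t w - a * C t w)"
  unfolding storage_feas_def
proof (intro ballI conjI)
  fix t w assume t: "t \<in> {1..NT M}" and w: "w \<in> {1..NW M}"
  have f: "s t w = eta_dis M i * dis t w - ch t w / eta_ch M i"
      "dis t w \<le> zeta_dis M i * Qs M i" "ch t w \<le> zeta_ch M i * Qs M i"
    using feas t w unfolding storage_feas_def by blast+
  have shift: "(\<Sum>k\<in>{1..t}. (ch k w - a * C k w - (dis k w - a * D k w)) * Delta M) =
      (\<Sum>k\<in>{1..t}. (ch k w - dis k w) * Delta M) + a * Delta M * (\<Sum>k\<in>{1..t}. D k w - C k w)"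
    by (simp add: sum.distrib sum_distrib_left sum_subtractf algebra_simps)
  have "0 \<le> a * D t w" "0 \<le> a * C t w" using assms by simp_all
  then show "dis t w - a * D t w \<le> zeta_dis M i * Qs M i" "ch t w - a * C t w \<le> zeta_ch M i * Qs M i"
    using f by linarith+
  show "0 \<le> dis t w - a * D t w" "0 \<le> ch t w - a * C t w" using dis[OF t w] ch[OF t w] by simp_all
  show "s t w - a * (eta_dis M i * D t w - C t w / eta_ch M i) =
        eta_dis M i * (dis t w - a * D t w) - (ch t w - a * C t w) / eta_ch M i"
    using f assms(2) by (simp add: field_simps)
  show "0 \<le> (\<Sum>k\<in>{1..t}. (ch k w - a * C k w - (dis k w - a * D k w)) * Delta M)"
    "(\<Sum>k\<in>{1..t}. (ch k w - a * C k w - (dis k w - a * D k w)) * Delta M) \<le> Qs M i"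
    using level[OF t w] unfolding shift by simp_all
qed

locale storage_equilibrium =
  fixes M :: market and p :: profile and i :: nat
  assumes valid: "valid_market M" and nash: "nash_equilibrium M p" and node: "i \<in> Nodes M"
begin

lemma Delta_pos: "0 < Delta M"
  and cs_pos: "0 < cs M i"
  and Qs_nonneg: "0 \<le> Qs M i"
  and eta_ch_pos: "0 < eta_ch M i" and eta_ch_le_1: "eta_ch M i \<le> 1"
  and eta_dis_pos: "0 < eta_dis M i" and eta_dis_le_1: "eta_dis M i \<le> 1"
  and gamma_s_cases: "gamma_s M i = 0 \<or> gamma_s M i = 1"
  using valid node unfolding valid_market_def by auto

lemma beta_pos: "t \<in> {1..NT M} \<Longrightarrow> 0 < beta M i t"
  and Psi_pos: "w \<in> {1..NW M} \<Longrightarrow> 0 < Psi M w"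
  and price_pos: "t \<in> {1..NT M} \<Longrightarrow> 0 < price M p i t w"
  using valid node unfolding valid_market_def price_def by auto

lemma storage_feasible: "storage_feas M i (qs p i) (qdis p i) (qch p i)"
  using nash node unfolding nash_equilibrium_def by blast

lemma storage_flows:
  assumes "t \<in> {1..NT M}" "w \<in> {1..NW M}"
  shows "0 \<le> qdis p i t w" "0 \<le> qch p i t w"
    and "qs p i t w = eta_dis M i * qdis p i t w - qch p i t w / eta_ch M i"
  using storage_feasible assms unfolding storage_feas_def by blast+

lemma qs_le_ch_dis_diff:
  assumes "t \<in> {1..NT M}" "w \<in> {1..NW M}"
  shows "qs p i t w \<le> qdis p i t w - qch p i t w"
  using storage_net_output_le[OF eta_ch_pos eta_ch_le_1 _ eta_dis_le_1] eta_dis_pos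
    storage_flows[OF assms] by simp

definition level :: "nat \<Rightarrow> nat \<Rightarrow> real" where
  "level t w = (\<Sum>k\<in>{1..t}. (qch p i k w - qdis p i k w) * Delta M)"

lemma level_Suc: "level (Suc t) w = level t w + (qch p i (Suc t) w - qdis p i (Suc t) w) * Delta M"
  unfolding level_def by simp

lemma level_bounds:
  assumes "t \<le> NT M" "w \<in> {1..NW M}"
  shows "0 \<le> level t w" "level t w \<le> Qs M i"
  using storage_feasible assms Qs_nonneg unfolding storage_feas_def level_def
  by (cases "t = 0"; force)+

text \<open>The derivative of the storage firm's objective in its net output qs, operating cost aside;
  for a regulated firm the term P / beta contributes P.\<close>

definition marginal_revenue :: "nat \<Rightarrow> nat \<Rightarrow> real" where
  "marginal_revenue t w =
     price M p i t w * ((1 - gamma_s M i) * (1 - beta M i t * qs p i t w) + gamma_s M i)"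

lemma marginal_revenue_pos_if_qs_nonpos:
  assumes "t \<in> {1..NT M}" "qs p i t w \<le> 0"
  shows "0 < marginal_revenue t w"
proof -
  have "0 \<le> - beta M i t * qs p i t w"
    using beta_pos[OF assms(1)] assms(2) by (simp add: mult_nonneg_nonpos)
  then show ?thesis
    using gamma_s_cases price_pos[OF assms(1)] unfolding marginal_revenue_def by auto
qed

definition deviation :: "real \<Rightarrow> (nat \<Rightarrow> nat \<Rightarrow> real) \<Rightarrow> (nat \<Rightarrow> nat \<Rightarrow> real) \<Rightarrow> profile" where
  "deviation a D C = upd_storage p i
     (\<lambda>t w. qs p i t w - a * (eta_dis M i * D t w - C t w / eta_ch M i))
     (\<lambda>t w. qdis p i t w - a * D t w) (\<lambda>t w. qch p i t w - a * C t w)"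

definition feasible_direction :: "(nat \<Rightarrow> nat \<Rightarrow> real) \<Rightarrow> (nat \<Rightarrow> nat \<Rightarrow> real) \<Rightarrow> bool" where
  "feasible_direction D C \<longleftrightarrow> (\<exists>d>0. \<forall>a. 0 < a \<and> a < d \<longrightarrow> storage_feas M i
     (\<lambda>t w. qs p i t w - a * (eta_dis M i * D t w - C t w / eta_ch M i))
     (\<lambda>t w. qdis p i t w - a * D t w) (\<lambda>t w. qch p i t w - a * C t w))"

definition direction_gain :: "(nat \<Rightarrow> nat \<Rightarrow> real) \<Rightarrow> (nat \<Rightarrow> nat \<Rightarrow> real) \<Rightarrow> real" where
  "direction_gain D C = expect M (\<lambda>t w.
     D t w * (cs M i - eta_dis M i * marginal_revenue t w)
     + C t w * (cs M i + marginal_revenue t w / eta_ch M i))"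

lemma storage_profit_deviation_deriv:
  "((\<lambda>a. storage_profit M (deviation a D C) i) has_real_derivative direction_gain D C) (at 0)"
proof -
  define E where "E t w = eta_dis M i * D t w - C t w / eta_ch M i" for t w
  define X where "X t w = qs p i t w + (\<Sum>m\<in>WG M i. qwg p m i t w) + (\<Sum>n\<in>CG M i. qcg p n i t w)
       + (\<Sum>j\<in>Nb M i. qtr p i j t w)" for t w
  define F where "F t w a = alpha M i t * exp (- beta M i t * (X t w - a * E t w)) * (qs p i t w - a * E t w)
      - cs M i * ((qdis p i t w - a * D t w) + (qch p i t w - a * C t w))
      - gamma_s M i * (alpha M i t * exp (- beta M i t * (X t w - a * E t w)) * (qs p i t w - a * E t w)
         + alpha M i t * exp (- beta M i t * (X t w - a * E t w)) / beta M i t)" for t w a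
  have profit: "storage_profit M (deviation a D C) i = (\<Sum>w\<in>{1..NW M}. Psi M w * (\<Sum>t\<in>{1..NT M}. F t w a))" for a
    unfolding deviation_def storage_profit_def expect_def F_def E_def
    by (simp add: upd_storage_def price_def X_def algebra_simps)
  have "(F t w has_real_derivative D t w * (cs M i - eta_dis M i * marginal_revenue t w)
        + C t w * (cs M i + marginal_revenue t w / eta_ch M i)) (at 0)" if "t \<in> {1..NT M}" for t w
  proof -
    have "(F t w has_real_derivative cs M i * (D t w + C t w) - E t w
        * (alpha M i t * exp (- beta M i t * X t w))
        * ((1 - gamma_s M i) * (1 - beta M i t * qs p i t w) + gamma_s M i)) (at 0)"
      unfolding F_def by (rule storage_period_profit_deriv[OF beta_pos[OF that]])
    moreover have "alpha M i t * exp (- beta M i t * X t w) = price M p i t w"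
      by (simp add: price_def X_def)
    moreover have "cs * (D + C) - (ed * D - C / ec) * P * K = D * (cs - ed * (P * K)) + C * (cs + P * K / ec)"
      for cs D C ed ec P K :: real
      by (simp add: algebra_simps diff_divide_distrib add_divide_distrib)
    ultimately show ?thesis
      unfolding E_def marginal_revenue_def by simp
  qed
  then show ?thesis
    unfolding profit direction_gain_def expect_def by (intro DERIV_sum DERIV_cmult) auto
qed

lemma first_order_condition:
  assumes "feasible_direction D C"
  shows "direction_gain D C \<le> 0"
proof (rule ccontr)
  assume "\<not> direction_gain D C \<le> 0"
  then obtain e where e: "e > 0"
    and up: "\<And>h. 0 < h \<Longrightarrow> h < e \<Longrightarrow> storage_profit M (deviation 0 D C) i < storage_profit M (deviation (0 + h) D C) i"
    using DERIV_pos_inc_right[OF storage_profit_deviation_deriv] by (meson not_le)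
  obtain d where d: "d > 0" and feas: "\<And>a. 0 < a \<Longrightarrow> a < d \<Longrightarrow> storage_feas M i
     (\<lambda>t w. qs p i t w - a * (eta_dis M i * D t w - C t w / eta_ch M i))
     (\<lambda>t w. qdis p i t w - a * D t w) (\<lambda>t w. qch p i t w - a * C t w)"
    using assms unfolding feasible_direction_def by blast
  define h where "h = min d e / 2"
  have h: "0 < h" "h < d" "h < e" using d e unfolding h_def by auto
  have "storage_profit M (deviation h D C) i \<le> storage_profit M p i"
    using nash node feas[OF h(1,2)] unfolding nash_equilibrium_def deviation_def by blast
  moreover have "deviation 0 D C = p" by (simp add: deviation_def upd_storage_def)
  ultimately show False using up[OF h(1,3)] by simp
qed

text \<open>The elementary directions cut the discharge at t0 by one unit and the charge at t1 by c
  units. A step of size a raises the level by a Delta on [t0, t1) and by a Delta (1 - c) from t1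
  on, so slack is needed exactly there.\<close>

lemma impulse_level_shift_bounds:
  assumes t0: "1 \<le> t0" and t1: "t0 \<le> t1" and c: "0 < c" "c \<le> 1" and "0 \<le> \<delta>"
    and room: "\<And>t. t \<in> {t0..NT M} \<Longrightarrow> t < t1 \<or> c < 1 \<Longrightarrow> level t w0 + \<delta> \<le> Qs M i"
    and t: "t \<le> NT M" and w: "w \<in> {1..NW M}"
  shows "0 \<le> level t w + \<delta> * (\<Sum>k\<in>{1..t}. impulse t0 w0 k w - c * impulse t1 w0 k w)
    \<and> level t w + \<delta> * (\<Sum>k\<in>{1..t}. impulse t0 w0 k w - c * impulse t1 w0 k w) \<le> Qs M i"
proof -
  have sums: "(\<Sum>k\<in>{1..t}. impulse t0 w0 k w - c * impulse t1 w0 k w) =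
      (if w = w0 \<and> t0 \<le> t then 1 else 0) - (if w = w0 \<and> t1 \<le> t then c else 0)"
    using sum_impulse_upto[of t0 w0 w t] sum_impulse_upto[of t1 w0 w t] t0 t1
    by (simp add: sum_subtractf sum_distrib_left[symmetric])
  show ?thesis
  proof (cases "w = w0 \<and> t0 \<le> t")
    case True
    then have room_t: "c < 1 \<or> t < t1 \<Longrightarrow> level t w + \<delta> \<le> Qs M i"
      using room t by auto
    have "0 \<le> \<delta> * (1 - c)" "\<delta> * (1 - c) \<le> \<delta>"
      using \<open>0 \<le> \<delta>\<close> c by (simp_all add: mult_left_le)
    moreover have "level t w + \<delta> * (1 - c) \<le> Qs M i" if "t1 \<le> t"
    proof (cases "c < 1")
      case True
      then show ?thesis using room_t \<open>\<delta> * (1 - c) \<le> \<delta>\<close> by linarith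
    next
      case False
      then show ?thesis using c level_bounds[OF t w] by simp
    qed
    ultimately show ?thesis
      using True sums room_t level_bounds[OF t w] \<open>0 \<le> \<delta>\<close> by (cases "t1 \<le> t") auto
  next
    case False
    then show ?thesis using sums t1 level_bounds[OF t w] by auto
  qed
qed

lemma impulse_direction_feasible:
  assumes t0: "t0 \<in> {1..NT M}" and t1: "t1 \<in> {t0..NT M}" and w0: "w0 \<in> {1..NW M}"
    and c: "0 < c" "c \<le> 1" and dis: "0 < qdis p i t0 w0" and ch: "0 < qch p i t1 w0"
    and slack: "\<And>t. t \<in> {t0..NT M} \<Longrightarrow> t < t1 \<or> c < 1 \<Longrightarrow> level t w0 < Qs M i"
  shows "feasible_direction (impulse t0 w0) (\<lambda>t w. c * impulse t1 w0 t w)"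
proof -
  define S where "S = {t \<in> {t0..NT M}. t < t1 \<or> c < 1}"
  define m where "m = Min (insert 1 ((\<lambda>t. Qs M i - level t w0) ` S))"
  have m: "0 < m" "\<And>t. t \<in> S \<Longrightarrow> m \<le> Qs M i - level t w0"
    using slack unfolding m_def S_def by auto
  define d where "d = min (min (qdis p i t0 w0) (qch p i t1 w0 / c)) (m / Delta M)"
  have "0 < d" using dis ch c m Delta_pos unfolding d_def by auto
  moreover have "storage_feas M i
     (\<lambda>t w. qs p i t w - a * (eta_dis M i * impulse t0 w0 t w - c * impulse t1 w0 t w / eta_ch M i))
     (\<lambda>t w. qdis p i t w - a * impulse t0 w0 t w) (\<lambda>t w. qch p i t w - a * (c * impulse t1 w0 t w))"
    if a: "0 < a" "a < d" for a
  proof (rule storage_feas_shift[OF storage_feasible])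
    have bounds: "a \<le> qdis p i t0 w0" "a * c \<le> qch p i t1 w0" "a * Delta M \<le> m"
      using a c Delta_pos unfolding d_def by (auto simp: field_simps)
    show "eta_ch M i \<noteq> 0" "0 \<le> a" using eta_ch_pos a by simp_all
    show "0 \<le> impulse t0 w0 t w" "0 \<le> c * impulse t1 w0 t w" for t w
      using c by (simp_all add: impulse_def)
    show "a * impulse t0 w0 t w \<le> qdis p i t w" "a * (c * impulse t1 w0 t w) \<le> qch p i t w"
      if "t \<in> {1..NT M}" "w \<in> {1..NW M}" for t w
      using bounds a storage_flows[OF that] unfolding impulse_def by (auto simp: mult.commute)
    have "level t w0 + a * Delta M \<le> Qs M i" if "t \<in> {t0..NT M}" "t < t1 \<or> c < 1" for t
      using m(2)[of t] bounds(3) that unfolding S_def by auto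
    then show "0 \<le> (\<Sum>k\<in>{1..t}. (qch p i k w - qdis p i k w) * Delta M)
          + a * Delta M * (\<Sum>k\<in>{1..t}. impulse t0 w0 k w - c * impulse t1 w0 k w) \<and>
        (\<Sum>k\<in>{1..t}. (qch p i k w - qdis p i k w) * Delta M)
          + a * Delta M * (\<Sum>k\<in>{1..t}. impulse t0 w0 k w - c * impulse t1 w0 k w) \<le> Qs M i"
      if "t \<in> {1..NT M}" "w \<in> {1..NW M}" for t w
      using impulse_level_shift_bounds[of t0 t1 c "a * Delta M" w0 t w] t0 t1 c a Delta_pos that
      unfolding level_def by auto
  qed
  ultimately show ?thesis unfolding feasible_direction_def by blast
qed

lemma impulse_cut_unprofitable:
  assumes t0: "t0 \<in> {1..NT M}" and t1: "t1 \<in> {t0..NT M}" and w0: "w0 \<in> {1..NW M}"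
    and c: "0 < c" "c \<le> 1" and "0 < qdis p i t0 w0" "0 < qch p i t1 w0"
    and "\<And>t. t \<in> {t0..NT M} \<Longrightarrow> t < t1 \<or> c < 1 \<Longrightarrow> level t w0 < Qs M i"
  shows "cs M i - eta_dis M i * marginal_revenue t0 w0
      + c * (cs M i + marginal_revenue t1 w0 / eta_ch M i) \<le> 0"
proof -
  have t1': "t1 \<in> {1..NT M}" using t0 t1 by auto
  have "direction_gain (impulse t0 w0) (\<lambda>t w. c * impulse t1 w0 t w) = expect M (\<lambda>t w.
      impulse t0 w0 t w * (cs M i - eta_dis M i * marginal_revenue t w)
      + impulse t1 w0 t w * (c * (cs M i + marginal_revenue t w / eta_ch M i)))"
    unfolding direction_gain_def by (simp add: mult_ac)
  also have "\<dots> = Psi M w0 *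
      (cs M i - eta_dis M i * marginal_revenue t0 w0 + c * (cs M i + marginal_revenue t1 w0 / eta_ch M i))"
    by (simp only: expect_add expect_impulse[OF t0 w0] expect_impulse[OF t1' w0]) (simp add: distrib_left)
  finally have gain: "direction_gain (impulse t0 w0) (\<lambda>t w. c * impulse t1 w0 t w) = \<dots>" .
  have "direction_gain (impulse t0 w0) (\<lambda>t w. c * impulse t1 w0 t w) \<le> 0"
    using first_order_condition impulse_direction_feasible assms by blast
  then show ?thesis using gain Psi_pos[OF w0] by (simp add: mult_le_0_iff)
qed

lemma first_full_time_after:
  assumes t0: "t0 \<in> {1..NT M}" and w0: "w0 \<in> {1..NW M}"
    and net_discharge: "qch p i t0 w0 < qdis p i t0 w0"
    and full: "\<exists>t\<in>{t0..NT M}. \<not> level t w0 < Qs M i"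
  obtains k where "k \<in> {t0<..NT M}" "\<And>t. t \<in> {t0..<k} \<Longrightarrow> level t w0 < Qs M i"
    and "qdis p i k w0 < qch p i k w0"
proof -
  obtain n where n: "t0 = Suc n" using t0 by (cases t0) auto
  have "level t0 w0 < level n w0"
    using level_Suc[of n w0] net_discharge Delta_pos n by (simp add: mult_less_0_iff)
  then have not_full_t0: "level t0 w0 < Qs M i"
    using level_bounds(2)[of n w0] n t0 w0 by simp
  define k where "k = (LEAST t. t0 \<le> t \<and> t \<le> NT M \<and> \<not> level t w0 < Qs M i)"
  have "\<exists>t. t0 \<le> t \<and> t \<le> NT M \<and> \<not> level t w0 < Qs M i" using full by auto
  from LeastI_ex[OF this] have k: "t0 \<le> k" "k \<le> NT M" "\<not> level k w0 < Qs M i"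
    unfolding k_def by blast+
  have before: "level t w0 < Qs M i" if "t \<in> {t0..<k}" for t
    using not_less_Least[of t "\<lambda>t. t0 \<le> t \<and> t \<le> NT M \<and> \<not> level t w0 < Qs M i"] that k(2)
    unfolding k_def by auto
  have "t0 < k" using k not_full_t0 by (auto simp: le_less)
  then obtain k' where k': "k = Suc k'" "t0 \<le> k'" by (cases k) auto
  have "level k' w0 < level k w0" using before[of k'] k k' by auto
  then have "qdis p i k w0 < qch p i k w0"
    using level_Suc[of k' w0] k' Delta_pos by (simp add: zero_less_mult_iff)
  then show ?thesis using that \<open>t0 < k\<close> k(2) before by auto
qed

lemma not_charging_while_discharging:
  assumes t0: "t0 \<in> {1..NT M}" and w0: "w0 \<in> {1..NW M}"
  shows "\<not> (0 < qch p i t0 w0 \<and> 0 < qdis p i t0 w0)"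
proof
  assume both: "0 < qch p i t0 w0 \<and> 0 < qdis p i t0 w0"
  have t0': "t0 \<in> {t0..NT M}" using t0 by simp
  consider "0 \<le> marginal_revenue t0 w0"
    | "marginal_revenue t0 w0 < 0" "\<forall>t\<in>{t0..NT M}. level t w0 < Qs M i"
    | "marginal_revenue t0 w0 < 0" "\<exists>t\<in>{t0..NT M}. \<not> level t w0 < Qs M i"
    by fastforce
  then show False
  proof cases
    case 1
    have "cs M i - eta_dis M i * marginal_revenue t0 w0 + (cs M i + marginal_revenue t0 w0 / eta_ch M i) \<le> 0"
      using impulse_cut_unprofitable[OF t0 t0' w0, where c=1] both by simp
    moreover have "eta_dis M i \<le> 1 / eta_ch M i"
      using eta_dis_le_1 eta_ch_pos eta_ch_le_1 by (simp add: le_divide_eq mult_le_one)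
    then have "eta_dis M i * marginal_revenue t0 w0 \<le> marginal_revenue t0 w0 / eta_ch M i"
      using mult_right_mono[OF _ 1] by fastforce
    ultimately show False using cs_pos by linarith
  next
    case 2
    define r where "r = eta_ch M i * eta_dis M i"
    have r: "0 < r" "r \<le> 1"
      using eta_ch_pos eta_ch_le_1 eta_dis_pos eta_dis_le_1 unfolding r_def by (auto intro: mult_le_one)
    have "cs M i - eta_dis M i * marginal_revenue t0 w0 + r * (cs M i + marginal_revenue t0 w0 / eta_ch M i) \<le> 0"
      using impulse_cut_unprofitable[OF t0 t0' w0 r] both 2 by auto
    moreover have "r * (marginal_revenue t0 w0 / eta_ch M i) = eta_dis M i * marginal_revenue t0 w0"
      using eta_ch_pos unfolding r_def by simp
    moreover have "0 < r * cs M i" using r cs_pos by simp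
    ultimately show False using cs_pos by (simp add: distrib_left)
  next
    case 3
    have "0 < qs p i t0 w0" using marginal_revenue_pos_if_qs_nonpos[OF t0, of w0] 3 by linarith
    then have "qch p i t0 w0 < qdis p i t0 w0" using qs_le_ch_dis_diff[OF t0 w0] by simp
    then obtain k where k: "k \<in> {t0<..NT M}" "\<And>t. t \<in> {t0..<k} \<Longrightarrow> level t w0 < Qs M i"
      and charging: "qdis p i k w0 < qch p i k w0"
      using first_full_time_after[OF t0 w0] 3 by blast
    have k': "k \<in> {1..NT M}" "k \<in> {t0..NT M}" using k t0 by auto
    have "qs p i k w0 < 0" using qs_le_ch_dis_diff[OF k'(1) w0] charging by simp
    then have "0 < marginal_revenue k w0 / eta_ch M i"
      using marginal_revenue_pos_if_qs_nonpos[OF k'(1)] eta_ch_pos by simp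
    moreover have "cs M i - eta_dis M i * marginal_revenue t0 w0 + (cs M i + marginal_revenue k w0 / eta_ch M i) \<le> 0"
      using impulse_cut_unprofitable[OF t0 k'(2) w0, where c=1] both charging k
        storage_flows(1)[OF k'(1) w0] by fastforce
    moreover have "eta_dis M i * marginal_revenue t0 w0 < 0"
      using 3 eta_dis_pos by (simp add: mult_pos_neg)
    ultimately show False using cs_pos by simp
  qed
qed

end

theorem proposition1:
  assumes "valid_market M"
    and "nash_equilibrium M p"
  shows "\<forall>i\<in>Nodes M. \<forall>t\<in>{1..NT M}. \<forall>w\<in>{1..NW M}.
           \<not> (qch p i t w > 0 \<and> qdis p i t w > 0)"
proof (intro ballI)
  fix i t w assume "i \<in> Nodes M" "t \<in> {1..NT M}" "w \<in> {1..NW M}"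
  then show "\<not> (qch p i t w > 0 \<and> qdis p i t w > 0)"
    using storage_equilibrium.not_charging_while_discharging[of M p i] assms
    unfolding storage_equilibrium_def by blast
qed

end
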